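(* Let $1\le m\le n$ in type $B$ and $1\le m\le n-1$ in types $C$ and $D$. For all $m+1\le i,j\le (m+1)'$, in $\mathrm X(\mathfrak g_N)[[u^{-1}]]$, $$\begin{vmatrix} t_{11}(u)&\dots&t_{1m}(u)&t_{1j}(u)\\ \vdots&&\vdots&\vdots\\ t_{m1}(u)&\dots&t_{mm}(u)&t_{mj}(u)\\ t_{i1}(u)&\dots&t_{im}(u)&\boxed{t_{ij}(u)}\end{vmatrix} = t^{1\dots m}_{1\dots m}(u+m)^{-1}\cdot t^{1\dots m\,i}_{1\dots m\,j}(u+m).$$
   Context: Let $n\ge 1$ and let $\mathfrak g_N$ be one of: $\mathfrak o_N$ with $N=2n+1$ (type $B_n$), $\mathfrak{sp}_N$ with $N=2n$ (type $C_n$), or $\mathfrak o_N$ with $N=2n$ (type $D_n$). For $1\le i\le N$ set $i'=N-i+1$. In the symplectic case put $\varepsilon_i=1$ for $1\le i\le n$ and $\varepsilon_i=-1$ for $n+1\le i\le 2n$. Set $\theta_{ij}=1$ in the orthogonal case and $\theta_{ij}=\varepsilon_i\varepsilon_j$ in the symplectic case, and $\kappa=N/2-1$ in the orthogonal case, $\kappa=N/2+1$ in the symplectic case. Let $e_{ij}$ ($1\le i,j\le N$) be the matrix units of $\mathrm{End}\,\mathbb C^N$, $P=\sum_{i,j}e_{ij}\otimes e_{ji}$, $Q=\sum_{i,j}\theta_{ij}\,e_{ij}\otimes e_{i'j'}$, and $R(u)=1-\frac{P}{u}+\frac{Q}{u-\kappa}$. For $C\in\mathrm{End}\,\mathbb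 C^N\otimes\mathrm{End}\,\mathbb C^N$ and $1\le a<b\le m$, $C_{ab}$ denotes the element of $(\mathrm{End}\,\mathbb C^N)^{\otimes m}$ acting as $C$ on the $a$-th and $b$-th tensor factors and as the identity on the others; for $X=\sum_{i,j} e_{ij}\otimes X_{ij}\in\mathrm{End}\,\mathbb C^N\otimes\mathcal A$, $X_a=\sum_{i,j}1^{\otimes(a-1)}\otimes e_{ij}\otimes 1^{\otimes(m-a)}\otimes X_{ij}$. The extended Yangian $\mathrm X(\mathfrak g_N)$ is the unital associative $\mathbb C$-algebra with generators $t_{ij}^{(r)}$ ($1\le i,j\le N$, $r\ge1$) subject to $R_{12}(u-v)T_1(u)T_2(v)=T_2(v)T_1(u)R_{12}(u-v)$, where $t_{ij}(u)=\delta_{ij}+\sum_{r\ge1}t_{ij}^{(r)}u^{-r}$ and $T(u)=\sum_{i,j}e_{ij}\otimes t_{ij}(u)$ (the relation is read after multiplying both sides by $u-v$ and $u-v-\kappa$, as an identity of formal series). Quantum minors of type $A$: for $a_1,\dots,a_k,b_1,\dots,b_k\in\{1,\dots,N\}$, $t^{a_1\dots a_k}_{b_1\dots b_k}(u)=\sum_{p\in\mathfrak S_k}\mathrm{sgn}\,p\cdot t_{a_{p(1)}b_1}(u)\,t_{a_{p(2)}b_2}(u-1)\cdots t_{a_{p(k)}b_k}(u-k+1)$. Quasideterminants: for a square matrix $A=[a_{ij}]$ over a ring such that the matrix $A^{ij}$ obtained by deleting row $i$ and column $j$ is invertible, $|A|_{ij}=a_{ij}-r_i^{j}(A^{ij})^{-1}c_j^{i}$,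 where $r_i^j$ is the $i$-th row of $A$ with $a_{ij}$ removed and $c_j^i$ is the $j$-th column with $a_{ij}$ removed; it is denoted by writing the matrix with the entry $a_{ij}$ boxed. *)

theory Defs
  imports Complex_Main "HOL-Computational_Algebra.Formal_Power_Series"
    "HOL-Combinatorics.Permutations"
begin

datatype gtype = TB | TC | TD

definition Ndim :: "gtype \<Rightarrow> nat \<Rightarrow> nat" where
  "Ndim g n = (if g = TB then 2*n+1 else 2*n)"

definition orthogonal :: "gtype \<Rightarrow> bool" where
  "orthogonal g = (g \<noteq> TC)"

(* i' = N - i + 1 *)
definition pr :: "nat \<Rightarrow> nat \<Rightarrow> nat" where
  "pr N i = N + 1 - i"

definition epsl :: "nat \<Rightarrow> nat \<Rightarrow> real" where
  "epsl n i = (if i \<le> n then 1 else -1)"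

definition theta :: "gtype \<Rightarrow> nat \<Rightarrow> nat \<Rightarrow> nat \<Rightarrow> real" where
  "theta g n i j = (if orthogonal g then 1 else epsl n i * epsl n j)"

definition kappa :: "gtype \<Rightarrow> nat \<Rightarrow> real" where
  "kappa g n = (if orthogonal g then real (Ndim g n) / 2 - 1 else real (Ndim g n) / 2 + 1)"

text \<open>A family of generators t i j r (r \<ge> 1) in an algebra; the coefficient of u^(-r) in
  t_ij(u) (indexed by an integer, zero for negative exponents).\<close>

definition tc :: "(nat \<Rightarrow> nat \<Rightarrow> nat \<Rightarrow> 'a::ring_1) \<Rightarrow> nat \<Rightarrow> nat \<Rightarrow> int \<Rightarrow> 'a" where
  "tc t i j r = (if r = 0 then (if i = j then 1 else 0)
                 else if r > 0 then t i j (nat r) else 0)"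

text \<open>Polynomials in u, v with real coefficients, given as coefficient functions (p,q)
  for u^p v^q, p,q \<le> 2; they act on two-variable Laurent series F (coefficient F r s of
  u^(-r) v^(-s)) by multiplication.\<close>

definition pD2 :: "real \<Rightarrow> nat \<Rightarrow> nat \<Rightarrow> real" where  (* (u-v)(u-v-\<kappa>) *)
  "pD2 k p q = (if (p,q) = (2,0) then 1 else if (p,q) = (1,1) then -2
               else if (p,q) = (0,2) then 1 else if (p,q) = (1,0) then -k
               else if (p,q) = (0,1) then k else 0)"

definition pD1k :: "real \<Rightarrow> nat \<Rightarrow> nat \<Rightarrow> real" where  (* u-v-\<kappa> *)
  "pD1k k p q = (if (p,q) = (1,0) then 1 else if (p,q) = (0,1) then -1
                else if (p,q) = (0,0) then -k else 0)"

definition pD1 :: "nat \<Rightarrow> nat \<Rightarrow> real" where  (* u-v *)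
  "pD1 p q = (if (p,q) = (1,0) then 1 else if (p,q) = (0,1) then -1 else 0)"

definition polyact :: "(nat \<Rightarrow> nat \<Rightarrow> real) \<Rightarrow> (int \<Rightarrow> int \<Rightarrow> 'a::real_algebra_1) \<Rightarrow> int \<Rightarrow> int \<Rightarrow> 'a" where
  "polyact c F r s = (\<Sum>p\<le>2. \<Sum>q\<le>2. of_real (c p q) * F (r + int p) (s + int q))"

text \<open>Matrix entry ((i,k),(a,c)) of (u-v)(u-v-\<kappa>) R(u-v)
  = (u-v)(u-v-\<kappa>) 1 - (u-v-\<kappa>) P + (u-v) Q, where e_ij \<otimes> e_kl has entry 1
  at ((i,k),(j,l)).\<close>

definition Rpoly :: "gtype \<Rightarrow> nat \<Rightarrow> nat \<Rightarrow> nat \<Rightarrow> nat \<Rightarrow> nat \<Rightarrow> nat \<Rightarrow> nat \<Rightarrow> real" where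
  "Rpoly g n i k a c p q =
     (let N = Ndim g n in
       (if i = a \<and> k = c then pD2 (kappa g n) p q else 0)
     - (if i = c \<and> k = a then pD1k (kappa g n) p q else 0)
     + (if k = pr N i \<and> c = pr N a then theta g n i a * pD1 p q else 0))"

definition RTT :: "gtype \<Rightarrow> nat \<Rightarrow> (nat \<Rightarrow> nat \<Rightarrow> nat \<Rightarrow> 'a::real_algebra_1) \<Rightarrow> bool" where
  "RTT g n t = (let N = Ndim g n in
     \<forall>i\<in>{1..N}. \<forall>k\<in>{1..N}. \<forall>j\<in>{1..N}. \<forall>l\<in>{1..N}. \<forall>r s :: int.
       (\<Sum>a=1..N. \<Sum>c=1..N. polyact (Rpoly g n i k a c) (\<lambda>r s. tc t a j r * tc t c l s) r s)
     = (\<Sum>a=1..N. \<Sum>c=1..N. polyact (Rpoly g n a c j l) (\<lambda>r s. tc t k c s * tc t i a r) r s))"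

text \<open>t_ij(u) as a formal power series in the variable u^(-1).\<close>

definition Tser :: "(nat \<Rightarrow> nat \<Rightarrow> nat \<Rightarrow> 'a::ring_1) \<Rightarrow> nat \<Rightarrow> nat \<Rightarrow> 'a fps" where
  "Tser t i j = Abs_fps (\<lambda>r. tc t i j (int r))"

text \<open>If f = \<Sum>_r f_r u^(-r), then shiftu c f = \<Sum>_r f_r (u+c)^(-r), expanded in u^(-1).\<close>

definition shiftu :: "int \<Rightarrow> 'a::ring_1 fps \<Rightarrow> 'a fps" where
  "shiftu c f = Abs_fps (\<lambda>s. if s = 0 then fps_nth f 0
      else (\<Sum>r=1..s. fps_nth f r * of_int ((-c)^(s-r) * int ((s-1) choose (r-1)))))"

definition qminor :: "(nat \<Rightarrow> nat \<Rightarrow> nat \<Rightarrow> 'a::ring_1) \<Rightarrow> nat list \<Rightarrow> nat list \<Rightarrow> int \<Rightarrow> 'a fps" where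
  "qminor t as bs c = (let k = length bs in
     \<Sum>p\<in>{p. p permutes {0..<k}}.
        of_int (sign p) * prod_list (map (\<lambda>s. shiftu (c - int s) (Tser t (as ! p s) (bs ! s))) [0..<k]))"

definition invertible_el :: "'a::ring_1 \<Rightarrow> bool" where
  "invertible_el x = (\<exists>y. x * y = 1 \<and> y * x = 1)"

definition rinv :: "'a::ring_1 \<Rightarrow> 'a" where
  "rinv x = (THE y. x * y = 1 \<and> y * x = 1)"

text \<open>Matrices are functions M p q with rows indexed by I and columns by J
  (|I| = |J|). An inverse has rows indexed by J and columns by I.\<close>

definition is_mat_inv_on :: "nat set \<Rightarrow> nat set \<Rightarrow> (nat \<Rightarrow> nat \<Rightarrow> 'a::ring_1) \<Rightarrow> (nat \<Rightarrow> nat \<Rightarrow> 'a) \<Rightarrow> bool" where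
  "is_mat_inv_on I J M Ninv =
     ((\<forall>q p. (q \<notin> J \<or> p \<notin> I) \<longrightarrow> Ninv q p = 0)
      \<and> (\<forall>p\<in>I. \<forall>p'\<in>I. (\<Sum>q\<in>J. M p q * Ninv q p') = (if p = p' then 1 else 0))
      \<and> (\<forall>q\<in>J. \<forall>q'\<in>J. (\<Sum>p\<in>I. Ninv q p * M p q') = (if q = q' then 1 else 0)))"

definition mat_invertible_on :: "nat set \<Rightarrow> nat set \<Rightarrow> (nat \<Rightarrow> nat \<Rightarrow> 'a::ring_1) \<Rightarrow> bool" where
  "mat_invertible_on I J M = (\<exists>Ninv. is_mat_inv_on I J M Ninv)"

definition mat_inv_on :: "nat set \<Rightarrow> nat set \<Rightarrow> (nat \<Rightarrow> nat \<Rightarrow> 'a::ring_1) \<Rightarrow> nat \<Rightarrow> nat \<Rightarrow> 'a" where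
  "mat_inv_on I J M = (THE Ninv. is_mat_inv_on I J M Ninv)"

definition quasidet :: "nat set \<Rightarrow> nat set \<Rightarrow> (nat \<Rightarrow> nat \<Rightarrow> 'a::ring_1) \<Rightarrow> nat \<Rightarrow> nat \<Rightarrow> 'a" where
  "quasidet I J M i j = M i j
     - (\<Sum>q\<in>J - {j}. \<Sum>p\<in>I - {i}. M i q * mat_inv_on (I - {i}) (J - {j}) M q p * M p j)"

end

theory Submission
  imports Defs
begin

text \<open>Expand the quantum minor \<open>t\<^bsup>1\<dots>m i\<^esup>\<^bsub>1\<dots>m b\<^esub>(u + m)\<close> along its last column,
  whose entries \<open>t\<^sub>p\<^sub>b(u)\<close> carry no shift: it equals \<open>\<Sum>\<^sub>p Y\<^sub>p t\<^sub>p\<^sub>b(u) + D t\<^sub>i\<^sub>b(u)\<close> with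
  cofactors \<open>Y\<^sub>p\<close> independent of \<open>b\<close> and \<open>D = t\<^bsup>1\<dots>m\<^esup>\<^bsub>1\<dots>m\<^esub>(u + m)\<close>. For \<open>b \<le> m\<close>
  a column index repeats and the minor vanishes: no two of the row indices \<open>1, \<dots>, m, i\<close> are
  conjugate under \<open>x \<mapsto> x'\<close>, so the \<open>Q\<close>-term of the \<open>RTT\<close> relation does not contribute and
  the remaining relation makes quantum minors antisymmetric in adjacent columns. Hence the row
  vector \<open>(Y, D)\<close> annihilates the columns \<open>1, \<dots>, m\<close>, and multiplying the quasideterminant from
  the left by \<open>D\<close> gives the minor with last column \<open>j\<close>. Both \<open>D\<close> and the block
  \<open>[t\<^sub>p\<^sub>q(u)]\<^sub>p\<^sub>,\<^sub>q\<^sub>\<le>\<^sub>m\<close> have constant term \<open>1\<close> and are therefore invertible.\<close>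

unbundle fps_syntax

section \<open>Shifted series\<close>

lemma geometric_fps_power_nth:
  "(Abs_fps (\<lambda>k. x ^ k) ^ r) $ k = x ^ k * of_nat ((r + k - 1) choose k)"
  for x :: "'a::comm_semiring_1"
proof (induction r arbitrary: k)
  case 0
  then show ?case by (cases k) (auto simp: binomial_eq_0)
next
  case (Suc r)
  have "(Abs_fps (\<lambda>k. x ^ k) ^ Suc r) $ k
      = (\<Sum>i=0..k. (Abs_fps (\<lambda>k. x ^ k) ^ r) $ i * x ^ (k - i))"
    by (simp only: power_Suc2 fps_mult_nth fps_nth_Abs_fps)
  also have "\<dots> = (\<Sum>i=0..k. x ^ k * of_nat ((r + i - 1) choose i))"
  proof (rule sum.cong[OF refl])
    fix i assume "i \<in> {0..k}"
    then have "x ^ i * x ^ (k - i) = x ^ k"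
      by (simp flip: power_add)
    then show "(Abs_fps (\<lambda>k. x ^ k) ^ r) $ i * x ^ (k - i) = x ^ k * of_nat ((r + i - 1) choose i)"
      unfolding Suc.IH by (metis mult.assoc mult.commute)
  qed
  also have "\<dots> = x ^ k * of_nat (\<Sum>i=0..k. (r + i - 1) choose i)"
    by (simp add: sum_distrib_left)
  also have "(\<Sum>i=0..k. (r + i - 1) choose i) = (Suc r + k - 1) choose k"
  proof (cases r)
    case 0
    then have "(\<Sum>i=0..k. (r + i - 1) choose i) = (\<Sum>i=0..k. if i = 0 then 1 else 0)"
      by (intro sum.cong) (auto simp: binomial_eq_0)
    with 0 show ?thesis by simp
  next
    case (Suc r')
    then show ?thesis using sum_choose_lower[of r' k] by (simp add: atLeast0AtMost)
  qed
  finally show ?case .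
qed

text \<open>The expansion of \<open>(u + c)\<^sup>-\<^sup>1 = u\<^sup>-\<^sup>1 / (1 + c u\<^sup>-\<^sup>1)\<close> in powers of
  \<open>u\<^sup>-\<^sup>1\<close>, which is the variable of the formal power series.\<close>

definition recip_series :: "int \<Rightarrow> real fps" where
  "recip_series c = fps_X * Abs_fps (\<lambda>k. (- of_int c) ^ k)"

lemma recip_series_power_nth:
  "(recip_series c ^ r) $ a =
     (if r \<le> a then (- of_int c) ^ (a - r) * of_nat ((a - 1) choose (a - r)) else 0)"
  by (auto simp: recip_series_def power_mult_distrib fps_X_power_mult_nth geometric_fps_power_nth)

lemma shiftu_nth: "shiftu c f $ a = (\<Sum>r\<le>a. of_real ((recip_series c ^ r) $ a) * f $ r)"
proof (cases "a = 0")
  case True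
  then show ?thesis by (simp add: shiftu_def)
next
  case False
  have "(\<Sum>r\<le>a. of_real ((recip_series c ^ r) $ a) * f $ r)
      = (\<Sum>r=1..a. of_real ((recip_series c ^ r) $ a) * f $ r)"
    using False by (intro sum.mono_neutral_right) (auto simp: recip_series_power_nth binomial_eq_0)
  also have "\<dots> = (\<Sum>r=1..a. f $ r * of_int ((-c) ^ (a - r) * int ((a - 1) choose (r - 1))))"
  proof (rule sum.cong[OF refl])
    fix r assume r: "r \<in> {1..a}"
    then have "a - 1 - (r - 1) = a - r" by auto
    with r have "(a - 1) choose (a - r) = (a - 1) choose (r - 1)"
      using binomial_symmetric[of "r - 1" "a - 1"] by auto
    with r have "recip_series c ^ r $ a = of_int ((-c) ^ (a - r) * int ((a - 1) choose (r - 1)))"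
      by (simp add: recip_series_power_nth)
    then show "of_real ((recip_series c ^ r) $ a) * f $ r
        = f $ r * of_int ((-c) ^ (a - r) * int ((a - 1) choose (r - 1)))"
      by (simp only: of_real_of_int_eq mult_of_int_commute)
  qed
  finally show ?thesis
    using False by (simp add: shiftu_def)
qed

lemma shiftu_nth_le:
  "a \<le> K \<Longrightarrow> shiftu c f $ a = (\<Sum>r\<le>K. of_real ((recip_series c ^ r) $ a) * f $ r)"
  unfolding shiftu_nth by (intro sum.mono_neutral_left) (auto simp: recip_series_power_nth)

lemma shiftu_0: "shiftu 0 (f::'a::real_algebra_1 fps) = f"
proof (rule fps_ext)
  fix a
  have "shiftu 0 f $ a = (\<Sum>r\<le>a. if r = a then f $ r else 0)"
    unfolding shiftu_nth by (rule sum.cong) (auto simp: recip_series_power_nth zero_power)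
  then show "shiftu 0 f $ a = f $ a" by simp
qed

lemma shiftu_nth_0: "shiftu c f $ 0 = f $ 0"
  by (simp add: shiftu_def)

lemma recip_series_mult: "recip_series c * (1 + fps_const (of_int c) * fps_X) = fps_X"
proof -
  define G :: "real fps" where "G = Abs_fps (\<lambda>k. (- of_int c) ^ k)"
  have "G * (1 + fps_const (of_int c) * fps_X) = G + fps_const (of_int c) * (fps_X * G)"
    by (simp add: algebra_simps)
  also have "\<dots> = 1"
  proof (rule fps_ext)
    fix n
    show "(G + fps_const (of_int c) * (fps_X * G)) $ n = 1 $ n"
      by (cases n) (simp_all add: G_def)
  qed
  finally show ?thesis
    unfolding recip_series_def G_def[symmetric] by (simp add: mult.assoc)
qed

lemma recip_series_diff:
  assumes "c - d = 1"
  shows "recip_series d - recip_series c = recip_series c * recip_series d"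
proof -
  let ?U = "(1 + fps_const (of_int c) * fps_X) * (1 + fps_const (of_int d) * (fps_X :: real fps))"
  have U: "?U \<noteq> 0"
  proof
    assume "?U = 0"
    then have "?U $ 0 = 0" by (simp only: fps_zero_nth)
    then show False by simp
  qed
  have c: "fps_const (of_int c) = fps_const (of_int d) + (1 :: real fps)"
    using assms by (metis add.commute diff_eq_eq fps_const_1_eq_1 fps_const_add of_int_add of_int_1)
  have "(recip_series d - recip_series c) * ?U
      = (recip_series d * (1 + fps_const (of_int d) * fps_X)) * (1 + fps_const (of_int c) * fps_X)
        - (recip_series c * (1 + fps_const (of_int c) * fps_X)) * (1 + fps_const (of_int d) * fps_X)"
    by (simp only: mult_ac left_diff_distrib)
  also have "\<dots> = fps_X * (1 + fps_const (of_int c) * fps_X) - fps_X * (1 + fps_const (of_int d) * fps_X)"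
    unfolding recip_series_mult ..
  also have "\<dots> = fps_X * fps_X"
    unfolding c by (simp add: algebra_simps)
  also have "\<dots> = (recip_series c * (1 + fps_const (of_int c) * fps_X))
                * (recip_series d * (1 + fps_const (of_int d) * fps_X))"
    unfolding recip_series_mult ..
  also have "\<dots> = (recip_series c * recip_series d) * ?U"
    by (simp only: mult_ac)
  finally show ?thesis
    using mult_right_cancel[OF U] by blast
qed

section \<open>Specialising two-variable series to the diagonal\<close>

lemma of_real_mult_commute: "of_real r * x = x * (of_real r :: 'a::real_algebra_1)"
  by (simp add: of_real_def)

lemma recip_series_power_mult_nth_eq_0:
  assumes "N < r + s"
  shows "(recip_series c ^ r * recip_series d ^ s) $ N = 0"
proof -
  have "recip_series c ^ r * recip_series d ^ s
      = fps_X ^ (r + s) * (Abs_fps (\<lambda>k. (- of_int c) ^ k) ^ r * Abs_fps (\<lambda>k. (- of_int d) ^ k) ^ s)"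
    by (simp add: recip_series_def power_mult_distrib power_add mult_ac)
  then show ?thesis
    using assms by (simp add: fps_X_power_mult_nth)
qed

lemma recip_series_power_mult_diff:
  assumes "c - d = 1"
  shows "recip_series c ^ r * recip_series d ^ Suc s - recip_series c ^ Suc r * recip_series d ^ s
    = recip_series c ^ Suc r * recip_series d ^ Suc s"
proof -
  have "recip_series c ^ r * recip_series d ^ Suc s - recip_series c ^ Suc r * recip_series d ^ s
      = recip_series c ^ r * recip_series d ^ s * (recip_series d - recip_series c)"
    by (simp add: algebra_simps)
  also have "\<dots> = recip_series c ^ Suc r * recip_series d ^ Suc s"
    using recip_series_diff[OF assms] by (simp add: ac_simps)
  finally show ?thesis .
qed

text \<open>The coefficient of \<open>u\<^sup>-\<^sup>N\<close> in \<open>\<Sum>\<^sub>r\<^sub>,\<^sub>s F r s (u + c)\<^sup>-\<^sup>r (u + d)\<^sup>-\<^sup>s\<close>, i.e.\ of the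
  two-variable series \<open>\<Sum> F r s u\<^sup>-\<^sup>r v\<^sup>-\<^sup>s\<close> specialised to \<open>u \<mapsto> u + c\<close>, \<open>v \<mapsto> u + d\<close>.\<close>

definition diag_shift :: "int \<Rightarrow> int \<Rightarrow> (nat \<Rightarrow> nat \<Rightarrow> 'a::real_algebra_1) \<Rightarrow> nat \<Rightarrow> 'a" where
  "diag_shift c d F N =
     (\<Sum>r\<le>N. \<Sum>s\<le>N. of_real ((recip_series c ^ r * recip_series d ^ s) $ N) * F r s)"

lemma diag_shift_diff: "diag_shift c d (\<lambda>r s. F r s - G r s) N = diag_shift c d F N - diag_shift c d G N"
  unfolding diag_shift_def by (simp add: right_diff_distrib sum_subtractf)

lemma diag_shift_mult: "diag_shift c d (\<lambda>r s. f $ r * g $ s) N = (shiftu c f * shiftu d g) $ N"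
proof -
  let ?b = "\<lambda>c a r. (recip_series c ^ r) $ a"
  have "(shiftu c f * shiftu d g) $ N = (\<Sum>a\<le>N. shiftu c f $ a * shiftu d g $ (N - a))"
    by (simp add: fps_mult_nth atLeast0AtMost)
  also have "\<dots> = (\<Sum>a\<le>N. (\<Sum>r\<le>N. of_real (?b c a r) * f $ r) * (\<Sum>s\<le>N. of_real (?b d (N - a) s) * g $ s))"
    by (intro sum.cong refl arg_cong2[where f="(*)"] shiftu_nth_le) auto
  also have "\<dots> = (\<Sum>a\<le>N. \<Sum>r\<le>N. \<Sum>s\<le>N. of_real (?b c a r * ?b d (N - a) s) * (f $ r * g $ s))"
    unfolding sum_product
  proof (intro sum.cong refl)
    fix a r s
    have "of_real (?b c a r) * f $ r * (of_real (?b d (N - a) s) * g $ s)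
        = of_real (?b c a r) * (f $ r * of_real (?b d (N - a) s)) * g $ s"
      by (simp add: mult.assoc)
    also have "\<dots> = of_real (?b c a r) * (of_real (?b d (N - a) s) * f $ r) * g $ s"
      by (simp only: of_real_mult_commute)
    also have "\<dots> = of_real (?b c a r * ?b d (N - a) s) * (f $ r * g $ s)"
      by (simp add: mult.assoc)
    finally show "of_real (?b c a r) * f $ r * (of_real (?b d (N - a) s) * g $ s)
        = of_real (?b c a r * ?b d (N - a) s) * (f $ r * g $ s)" .
  qed
  also have "\<dots> = (\<Sum>r\<le>N. \<Sum>s\<le>N. \<Sum>a\<le>N. of_real (?b c a r * ?b d (N - a) s) * (f $ r * g $ s))"
    by (rule trans[OF sum.swap], rule sum.cong[OF refl], rule sum.swap)
  also have "\<dots> = diag_shift c d (\<lambda>r s. f $ r * g $ s) N"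
    unfolding diag_shift_def
  proof (intro sum.cong refl)
    fix r s
    show "(\<Sum>a\<le>N. of_real (?b c a r * ?b d (N - a) s) * (f $ r * g $ s))
        = of_real ((recip_series c ^ r * recip_series d ^ s) $ N) * (f $ r * g $ s)"
      unfolding sum_distrib_right[symmetric] of_real_sum[symmetric]
      by (simp only: fps_mult_nth atLeast0AtMost)
  qed
  finally show ?thesis ..
qed

lemma diag_shift_mult_swap: "diag_shift c d (\<lambda>r s. g $ s * f $ r) N = (shiftu d g * shiftu c f) $ N"
proof -
  have "diag_shift c d (\<lambda>r s. g $ s * f $ r) N = diag_shift d c (\<lambda>s r. g $ s * f $ r) N"
    unfolding diag_shift_def
    by (rule trans[OF sum.swap], rule sum.cong[OF refl], rule sum.cong[OF refl], simp only: mult.commute)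
  then show ?thesis
    by (simp only: diag_shift_mult)
qed

text \<open>The coefficients \<open>F (r + 1) s - F r (s + 1)\<close> are those of \<open>(u - v) F\<close>; after the
  specialisation \<open>u \<mapsto> u + c\<close>, \<open>v \<mapsto> u + d\<close> with \<open>c - d = 1\<close> the factor \<open>u - v\<close> becomes 1.\<close>

lemma diag_shift_mult_diff:
  fixes F :: "nat \<Rightarrow> nat \<Rightarrow> 'a::real_algebra_1"
  assumes cd: "c - d = 1" and F0: "\<And>s. F 0 s = 0" "\<And>r. F r 0 = 0"
  shows "diag_shift c d (\<lambda>r s. F (Suc r) s - F r (Suc s)) N = diag_shift c d F N"
proof (cases N)
  case 0
  then show ?thesis by (simp add: diag_shift_def F0)
next
  case (Suc M)
  let ?g = "\<lambda>r s. (recip_series c ^ r * recip_series d ^ s) $ N"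
  have rec: "?g r (Suc s) - ?g (Suc r) s = ?g (Suc r) (Suc s)" for r s
    using recip_series_power_mult_diff[OF cd, of r s] by (metis fps_sub_nth)
  have R: "diag_shift c d F N = (\<Sum>r\<le>M. \<Sum>s\<le>M. of_real (?g (Suc r) (Suc s)) * F (Suc r) (Suc s))"
    unfolding diag_shift_def Suc sum.atMost_Suc_shift by (simp add: F0)
  have A: "(\<Sum>r\<le>N. \<Sum>s\<le>N. of_real (?g r s) * F (Suc r) s)
      = (\<Sum>r\<le>M. \<Sum>s\<le>M. of_real (?g r (Suc s)) * F (Suc r) (Suc s))"
  proof -
    have "(\<Sum>r\<le>N. \<Sum>s\<le>N. of_real (?g r s) * F (Suc r) s)
        = (\<Sum>r\<le>N. \<Sum>s\<le>M. of_real (?g r (Suc s)) * F (Suc r) (Suc s))"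
      unfolding Suc sum.atMost_Suc_shift[of _ M] by (simp add: F0)
    also have "\<dots> = (\<Sum>r\<le>M. \<Sum>s\<le>M. of_real (?g r (Suc s)) * F (Suc r) (Suc s))"
      unfolding Suc sum.atMost_Suc[of _ M]
      by (simp add: recip_series_power_mult_nth_eq_0 del: power_Suc)
    finally show ?thesis .
  qed
  have B: "(\<Sum>r\<le>N. \<Sum>s\<le>N. of_real (?g r s) * F r (Suc s))
      = (\<Sum>r\<le>M. \<Sum>s\<le>M. of_real (?g (Suc r) s) * F (Suc r) (Suc s))"
  proof -
    have "(\<Sum>r\<le>N. \<Sum>s\<le>N. of_real (?g r s) * F r (Suc s))
        = (\<Sum>r\<le>M. \<Sum>s\<le>N. of_real (?g (Suc r) s) * F (Suc r) (Suc s))"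
      unfolding Suc sum.atMost_Suc_shift[of _ M] by (simp add: F0)
    also have "\<dots> = (\<Sum>r\<le>M. \<Sum>s\<le>M. of_real (?g (Suc r) s) * F (Suc r) (Suc s))"
      unfolding Suc sum.atMost_Suc[of _ M]
      by (simp add: recip_series_power_mult_nth_eq_0 del: power_Suc)
    finally show ?thesis .
  qed
  have "diag_shift c d (\<lambda>r s. F (Suc r) s - F r (Suc s)) N
      = (\<Sum>r\<le>N. \<Sum>s\<le>N. of_real (?g r s) * F (Suc r) s) - (\<Sum>r\<le>N. \<Sum>s\<le>N. of_real (?g r s) * F r (Suc s))"
    unfolding diag_shift_def by (simp add: right_diff_distrib sum_subtractf)
  also have "\<dots> = (\<Sum>r\<le>M. \<Sum>s\<le>M. of_real (?g r (Suc s) - ?g (Suc r) s) * F (Suc r) (Suc s))"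
    unfolding A B by (simp add: left_diff_distrib sum_subtractf)
  also have "\<dots> = diag_shift c d F N"
    unfolding R rec ..
  finally show ?thesis .
qed

section \<open>Consequences of the \<open>RTT\<close> relation\<close>

lemma polyact_pD2:
  "polyact (pD2 k) F r s = F (r + 2) s - 2 * F (r + 1) (s + 1) + F r (s + 2)
     - of_real k * F (r + 1) s + of_real k * F r (s + 1)"
  unfolding polyact_def by (simp add: numeral_2_eq_2 atMost_Suc pD2_def algebra_simps)

lemma polyact_pD1k: "polyact (pD1k k) F r s = F (r + 1) s - F r (s + 1) - of_real k * F r s"
  unfolding polyact_def by (simp add: numeral_2_eq_2 atMost_Suc pD1k_def algebra_simps)

lemma polyact_diff: "polyact c (\<lambda>r s. F r s - G r s) r s = polyact c F r s - polyact c G r s"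
  unfolding polyact_def by (simp only: right_diff_distrib sum_subtractf)

lemma polyact_pD2_diff_pD1k:
  "polyact (pD2 k) H r s - polyact (pD1k k) K r s
     = polyact (pD1k k) (\<lambda>r s. H (r + 1) s - H r (s + 1) - K r s) r s"
proof -
  have e: "r + 1 + 1 = r + 2" "s + 1 + 1 = s + 2" by simp_all
  show ?thesis
    unfolding polyact_pD2 polyact_pD1k e by (simp add: algebra_simps mult_2)
qed

lemma polyact_pD1k_eq_0_imp_eq_0:
  fixes Z :: "int \<Rightarrow> int \<Rightarrow> 'a::real_algebra_1"
  assumes neg: "\<And>r s. r < 0 \<Longrightarrow> Z r s = 0"
    and ann: "\<And>r s. polyact (pD1k k) Z r s = 0"
  shows "Z r s = 0"
proof (induction "nat (r + 1)" arbitrary: r s)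
  case 0
  then show ?case by (simp add: neg)
next
  case (Suc m)
  have "m = nat (r - 1 + 1)"
    using Suc.hyps(2) by simp
  then have "Z (r - 1) s' = 0" for s'
    by (rule Suc.hyps(1))
  then show ?case
    using ann[of "r - 1" s] by (simp add: polyact_pD1k)
qed

lemma Rpoly_no_Q_left:
  assumes "k \<noteq> pr (Ndim g n) i"
  shows "Rpoly g n i k a c = (\<lambda>p q. (if a = i \<and> c = k then pD2 (kappa g n) p q else 0)
                                   - (if a = k \<and> c = i then pD1k (kappa g n) p q else 0))"
  using assms unfolding Rpoly_def Let_def by (intro ext) (simp add: eq_commute[of a] eq_commute[of c])

lemma Rpoly_no_Q_right:
  assumes "l \<noteq> pr (Ndim g n) j"
  shows "Rpoly g n a c j l = (\<lambda>p q. (if a = j \<and> c = l then pD2 (kappa g n) p q else 0)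
                                   - (if a = l \<and> c = j then pD1k (kappa g n) p q else 0))"
  using assms unfolding Rpoly_def Let_def by (intro ext) simp

lemma polyact_diff_coeffs: "polyact (\<lambda>p q. x p q - y p q) F r s = polyact x F r s - polyact y F r s"
  unfolding polyact_def by (simp only: of_real_diff left_diff_distrib sum_subtractf)

lemma polyact_if: "polyact (\<lambda>p q. if P then x p q else 0) F r s = (if P then polyact x F r s else 0)"
  unfolding polyact_def by simp

lemma sum_sum_delta:
  assumes "finite S" "a0 \<in> S" "c0 \<in> S"
  shows "(\<Sum>a\<in>S. \<Sum>c\<in>S. if a = a0 \<and> c = c0 then (X a c :: 'b::comm_monoid_add) else 0) = X a0 c0"
proof -
  have "(\<Sum>c\<in>S. if a = a0 \<and> c = c0 then X a c else 0) = (if a = a0 then X a c0 else 0)" for a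
    using assms by (cases "a = a0") (simp_all add: sum.delta')
  then show ?thesis
    using assms by (simp add: sum.delta')
qed

lemma RTT_polyact_commutator:
  assumes rtt: "RTT g n t"
    and idx: "i \<in> {1..Ndim g n}" "j \<in> {1..Ndim g n}" "k \<in> {1..Ndim g n}" "l \<in> {1..Ndim g n}"
    and nk: "k \<noteq> pr (Ndim g n) i" and nl: "l \<noteq> pr (Ndim g n) j"
  shows "polyact (pD2 (kappa g n)) (\<lambda>r s. tc t i j r * tc t k l s - tc t k l s * tc t i j r) r s
       = polyact (pD1k (kappa g n)) (\<lambda>r s. tc t k j r * tc t i l s - tc t k j s * tc t i l r) r s"
proof -
  let ?N = "Ndim g n" and ?k = "kappa g n"
  have fin: "finite {1..?N}" by simp
  have eq: "(\<Sum>a=1..?N. \<Sum>c=1..?N. polyact (Rpoly g n i k a c) (\<lambda>r s. tc t a j r * tc t c l s) r s)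
      = (\<Sum>a=1..?N. \<Sum>c=1..?N. polyact (Rpoly g n a c j l) (\<lambda>r s. tc t k c s * tc t i a r) r s)"
    using rtt idx unfolding RTT_def Let_def by blast
  have L: "(\<Sum>a=1..?N. \<Sum>c=1..?N. polyact (Rpoly g n i k a c) (\<lambda>r s. tc t a j r * tc t c l s) r s)
      = polyact (pD2 ?k) (\<lambda>r s. tc t i j r * tc t k l s) r s
        - polyact (pD1k ?k) (\<lambda>r s. tc t k j r * tc t i l s) r s"
    unfolding Rpoly_no_Q_left[OF nk] polyact_diff_coeffs
    by (simp only: sum_subtractf polyact_if sum_sum_delta[OF fin] idx)
  have R: "(\<Sum>a=1..?N. \<Sum>c=1..?N. polyact (Rpoly g n a c j l) (\<lambda>r s. tc t k c s * tc t i a r) r s)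
      = polyact (pD2 ?k) (\<lambda>r s. tc t k l s * tc t i j r) r s
        - polyact (pD1k ?k) (\<lambda>r s. tc t k j s * tc t i l r) r s"
    unfolding Rpoly_no_Q_right[OF nl] polyact_diff_coeffs
    by (simp only: sum_subtractf polyact_if sum_sum_delta[OF fin] idx)
  from eq have "polyact (pD2 ?k) (\<lambda>r s. tc t i j r * tc t k l s) r s
        - polyact (pD1k ?k) (\<lambda>r s. tc t k j r * tc t i l s) r s
      = polyact (pD2 ?k) (\<lambda>r s. tc t k l s * tc t i j r) r s
        - polyact (pD1k ?k) (\<lambda>r s. tc t k j s * tc t i l r) r s"
    unfolding L R .
  moreover have "a - b = c - d \<Longrightarrow> a - c = b - d" for a b c d :: 'a
    by (metis add_diff_cancel_left' diff_add_cancel diff_diff_eq2)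
  ultimately show ?thesis
    unfolding polyact_diff by blast
qed

lemma tc_neg: "r < 0 \<Longrightarrow> tc t a b r = 0"
  by (simp add: tc_def)

lemma tc_0_mult_commute: "tc t a b 0 * x = x * tc t a b 0"
  by (simp add: tc_def)

text \<open>It follows from the \<open>RTT\<close> relation by cancelling the factor \<open>u - v - \<kappa>\<close>,
  which is possible since all series involved are power series in \<open>u\<^sup>-\<^sup>1\<close>.\<close>

lemma RTT_commutator_coeff:
  assumes rtt: "RTT g n t"
    and idx: "i \<in> {1..Ndim g n}" "j \<in> {1..Ndim g n}" "k \<in> {1..Ndim g n}" "l \<in> {1..Ndim g n}"
    and nk: "k \<noteq> pr (Ndim g n) i" and nl: "l \<noteq> pr (Ndim g n) j"
  defines "H \<equiv> \<lambda>r s. tc t i j r * tc t k l s - tc t k l s * tc t i j r"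
  shows "H (r + 1) s - H r (s + 1) = tc t k j r * tc t i l s - tc t k j s * tc t i l r"
proof -
  define K where "K r s = tc t k j r * tc t i l s - tc t k j s * tc t i l r" for r s
  define Z where "Z r s = H (r + 1) s - H r (s + 1) - K r s" for r s
  have H0: "H r s = 0" if "r \<le> 0 \<or> s \<le> 0" for r s
  proof -
    have "r < 0 \<or> r = 0 \<or> s < 0 \<or> s = 0"
      using that by auto
    then show ?thesis
      unfolding H_def by (auto simp: tc_def)
  qed
  have "Z r s = 0" for r s
  proof (rule polyact_pD1k_eq_0_imp_eq_0)
    show "Z r s = 0" if "r < 0" for r s
      using that H0 by (simp add: Z_def K_def tc_neg)
    show "polyact (pD1k (kappa g n)) Z r s = 0" for r s
    proof -
      have "polyact (pD2 (kappa g n)) H r s = polyact (pD1k (kappa g n)) K r s"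
        unfolding H_def K_def by (rule RTT_polyact_commutator[OF rtt idx nk nl])
      moreover have "Z = (\<lambda>r s. H (r + 1) s - H r (s + 1) - K r s)"
        by (simp add: Z_def fun_eq_iff)
      ultimately show ?thesis
        using polyact_pD2_diff_pD1k[of "kappa g n" H r s K] by simp
    qed
  qed
  then show ?thesis
    unfolding Z_def K_def by (simp only: right_minus_eq)
qed

lemma Tser_nth: "Tser t a b $ r = tc t a b (int r)"
  by (simp add: Tser_def)

lemma RTT_shifted_commutator:
  assumes rtt: "RTT g n t"
    and idx: "i \<in> {1..Ndim g n}" "j \<in> {1..Ndim g n}" "k \<in> {1..Ndim g n}" "l \<in> {1..Ndim g n}"
    and nk: "k \<noteq> pr (Ndim g n) i" and nl: "l \<noteq> pr (Ndim g n) j"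
  shows "shiftu w (Tser t i j) * shiftu (w - 1) (Tser t k l) - shiftu (w - 1) (Tser t k l) * shiftu w (Tser t i j)
       = shiftu w (Tser t k j) * shiftu (w - 1) (Tser t i l) - shiftu (w - 1) (Tser t k j) * shiftu w (Tser t i l)"
proof (rule fps_ext)
  fix N
  define F where "F r s = Tser t i j $ r * Tser t k l $ s - Tser t k l $ s * Tser t i j $ r" for r s
  have F0: "F 0 s = 0" "F r 0 = 0" for r s
    unfolding F_def Tser_nth by (simp_all add: tc_0_mult_commute)
  have F_diff: "F (Suc r) s - F r (Suc s) = Tser t k j $ r * Tser t i l $ s - Tser t k j $ s * Tser t i l $ r"
    for r s
    using RTT_commutator_coeff[OF rtt idx nk nl, of "int r" "int s"]
    unfolding F_def Tser_nth by (simp add: add.commute)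
  have "(shiftu w (Tser t i j) * shiftu (w - 1) (Tser t k l)
        - shiftu (w - 1) (Tser t k l) * shiftu w (Tser t i j)) $ N = diag_shift w (w - 1) F N"
    unfolding F_def diag_shift_diff diag_shift_mult diag_shift_mult_swap by simp
  also have "\<dots> = diag_shift w (w - 1) (\<lambda>r s. F (Suc r) s - F r (Suc s)) N"
    by (rule diag_shift_mult_diff[symmetric]) (simp_all add: F0)
  also have "\<dots> = (shiftu w (Tser t k j) * shiftu (w - 1) (Tser t i l)
        - shiftu (w - 1) (Tser t k j) * shiftu w (Tser t i l)) $ N"
    unfolding F_diff diag_shift_diff diag_shift_mult diag_shift_mult_swap by simp
  finally show "(shiftu w (Tser t i j) * shiftu (w - 1) (Tser t k l)
        - shiftu (w - 1) (Tser t k l) * shiftu w (Tser t i j)) $ N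
      = (shiftu w (Tser t k j) * shiftu (w - 1) (Tser t i l)
        - shiftu (w - 1) (Tser t k j) * shiftu w (Tser t i l)) $ N" .
qed

text \<open>The relation \<open>t\<^sub>x\<^sub>b(u) t\<^sub>y\<^sub>b\<^sub>'(u - 1) + t\<^sub>x\<^sub>b\<^sub>'(u) t\<^sub>y\<^sub>b(u - 1)\<close> symmetric in \<open>x, y\<close>,
  which makes quantum minors antisymmetric in adjacent columns.\<close>

definition swap_symmetric :: "(nat \<Rightarrow> nat \<Rightarrow> nat \<Rightarrow> 'a::real_algebra_1) \<Rightarrow> nat set \<Rightarrow> nat set \<Rightarrow> bool" where
  "swap_symmetric t Rs Cs \<longleftrightarrow> (\<forall>x\<in>Rs. \<forall>y\<in>Rs. \<forall>b\<in>Cs. \<forall>b'\<in>Cs. \<forall>w.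
     shiftu w (Tser t x b) * shiftu (w - 1) (Tser t y b') + shiftu w (Tser t x b') * shiftu (w - 1) (Tser t y b)
   = shiftu w (Tser t y b) * shiftu (w - 1) (Tser t x b') + shiftu w (Tser t y b') * shiftu (w - 1) (Tser t x b))"

lemma RTT_swap_symmetric:
  assumes rtt: "RTT g n t"
    and Rs: "Rs \<subseteq> {1..Ndim g n}" and Cs: "Cs \<subseteq> {1..Ndim g n}"
    and nR: "\<And>x y. x \<in> Rs \<Longrightarrow> y \<in> Rs \<Longrightarrow> x \<noteq> y \<Longrightarrow> y \<noteq> pr (Ndim g n) x"
    and nC: "\<And>b b'. b \<in> Cs \<Longrightarrow> b' \<in> Cs \<Longrightarrow> b' \<noteq> pr (Ndim g n) b"
  shows "swap_symmetric t Rs Cs"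
  unfolding swap_symmetric_def
proof (intro ballI allI)
  fix x y b b' w
  assume x: "x \<in> Rs" and y: "y \<in> Rs" and b: "b \<in> Cs" and b': "b' \<in> Cs"
  show "shiftu w (Tser t x b) * shiftu (w - 1) (Tser t y b') + shiftu w (Tser t x b') * shiftu (w - 1) (Tser t y b)
      = shiftu w (Tser t y b) * shiftu (w - 1) (Tser t x b') + shiftu w (Tser t y b') * shiftu (w - 1) (Tser t x b)"
  proof (cases "x = y")
    case False
    have idx: "x \<in> {1..Ndim g n}" "y \<in> {1..Ndim g n}" "b \<in> {1..Ndim g n}" "b' \<in> {1..Ndim g n}"
      using x y b b' Rs Cs by auto
    have add_diffs: "a + a' = c + c'" if "a - e = c - f" "a' - f = c' - e" for a a' c c' e f :: "'a fps"
    proof -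
      have "a + a' = (a - e) + (a' - f) + e + f" by (simp add: algebra_simps)
      also have "\<dots> = c + c'" unfolding that by (simp add: algebra_simps)
      finally show ?thesis .
    qed
    show ?thesis
      by (rule add_diffs[OF RTT_shifted_commutator[OF rtt idx(1,3,2,4) nR[OF x y False] nC[OF b b']]
                            RTT_shifted_commutator[OF rtt idx(1,4,2,3) nR[OF x y False] nC[OF b' b]]])
  qed simp
qed

section \<open>Quantum minors\<close>

lemma eq_neg_imp_zero_real_vector: "(x::'a::real_vector) = - x \<Longrightarrow> x = 0"
  by (metis add.inverse_inverse scaleR_2 scaleR_eq_0_iff add_eq_0_iff2 zero_neq_numeral)

lemma fps_eq_neg_imp_zero: "(f::'a::real_vector fps) = - f \<Longrightarrow> f = 0"
  by (simp add: fps_eq_iff eq_neg_imp_zero_real_vector)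

lemma sum_permutes_eq_0_if_antisymmetric:
  fixes T :: "(nat \<Rightarrow> nat) \<Rightarrow> 'a::real_vector fps"
  assumes "\<tau> permutes S" and "\<And>p. p permutes S \<Longrightarrow> T (p \<circ> \<tau>) = - T p"
  shows "(\<Sum>p\<in>{p. p permutes S}. T p) = 0"
proof (rule fps_eq_neg_imp_zero)
  have "(\<Sum>p\<in>{p. p permutes S}. T p) = (\<Sum>p\<in>{p. p permutes S}. T (p \<circ> \<tau>))"
    by (rule sum_permutations_compose_right[OF assms(1)])
  also have "\<dots> = - (\<Sum>p\<in>{p. p permutes S}. T p)"
    by (simp add: assms(2) sum_negf)
  finally show "(\<Sum>p\<in>{p. p permutes S}. T p) = - (\<Sum>p\<in>{p. p permutes S}. T p)" .
qed

definition qminor_fn ::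
    "(nat \<Rightarrow> nat \<Rightarrow> nat \<Rightarrow> 'a::real_algebra_1) \<Rightarrow> (nat \<Rightarrow> nat) \<Rightarrow> (nat \<Rightarrow> nat) \<Rightarrow> nat \<Rightarrow> int \<Rightarrow> 'a fps" where
  "qminor_fn t as bs k c = (\<Sum>p\<in>{p. p permutes {0..<k}}.
      of_int (sign p) * prod_list (map (\<lambda>s. shiftu (c - int s) (Tser t (as (p s)) (bs s))) [0..<k]))"

lemma qminor_eq_qminor_fn: "qminor t as bs c = qminor_fn t (nth as) (nth bs) (length bs) c"
  by (simp add: qminor_def qminor_fn_def Let_def)

lemma qminor_fn_cong:
  assumes "\<And>x. x < k \<Longrightarrow> as x = as' x" "\<And>x. x < k \<Longrightarrow> bs x = bs' x"
  shows "qminor_fn t as bs k c = qminor_fn t as' bs' k c"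
  unfolding qminor_fn_def
proof (rule sum.cong[OF refl])
  fix p assume "p \<in> {p. p permutes {0..<k}}"
  then have "s < k \<Longrightarrow> p s < k" for s
    using permutes_in_image by fastforce
  then show "of_int (sign p) * prod_list (map (\<lambda>s. shiftu (c - int s) (Tser t (as (p s)) (bs s))) [0..<k])
    = of_int (sign p) * prod_list (map (\<lambda>s. shiftu (c - int s) (Tser t (as' (p s)) (bs' s))) [0..<k])"
    using assms by (intro arg_cong2[where f="(*)"] refl arg_cong[where f=prod_list] map_cong) auto
qed

lemma prod_list_map_upt_split_adjacent:
  assumes "Suc s < k"
  shows "prod_list (map f [0..<k])
    = prod_list (map f [0..<s]) * f s * f (Suc s) * prod_list (map f [Suc (Suc s)..<k])"
proof -
  have "[0..<k] = [0..<s] @ [s, Suc s] @ [Suc (Suc s)..<k]"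
    using assms upt_add_eq_append[of 0 s "k - s"] by (simp add: upt_conv_Cons)
  then show ?thesis
    by (simp add: mult.assoc)
qed

lemma qminor_fn_swap_adjacent_cols:
  fixes t :: "nat \<Rightarrow> nat \<Rightarrow> nat \<Rightarrow> 'a::real_algebra_1"
  assumes sk: "Suc s < k"
    and sym: "swap_symmetric t (as ` {0..<k}) Cs" and Cs: "bs s \<in> Cs" "bs (Suc s) \<in> Cs"
  shows "qminor_fn t as (bs \<circ> transpose s (Suc s)) k c = - qminor_fn t as bs k c"
proof -
  define \<tau> where "\<tau> = transpose s (Suc s)"
  define P where "P = {p. p permutes {0..<k}}"
  define f where "f p bs' q = shiftu (c - int q) (Tser t (as (p q)) (bs' q))" for p bs' q
  define pre where "pre p = prod_list (map (f p bs) [0..<s])" for p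
  define suf where "suf p = prod_list (map (f p bs) [Suc (Suc s)..<k])" for p
  define G where "G x y = shiftu (c - int s) (Tser t x (bs s)) * shiftu (c - int s - 1) (Tser t y (bs (Suc s)))
    + shiftu (c - int s) (Tser t x (bs (Suc s))) * shiftu (c - int s - 1) (Tser t y (bs s))" for x y
  \<comment> \<open>The two minors differ only in the factors at positions \<open>s\<close>, \<open>Suc s\<close>; their sum
    collects them into \<open>G\<close>, which is symmetric, so the sum is antisymmetric under \<open>p \<mapsto> p \<circ> \<tau>\<close>.\<close>
  define T where "T p = of_int (sign p) * (pre p * G (as (p s)) (as (p (Suc s))) * suf p)" for p
  have pre_suf: "prod_list (map (f p (bs \<circ> \<tau>)) [0..<s]) = pre p"
    "prod_list (map (f p (bs \<circ> \<tau>)) [Suc (Suc s)..<k]) = suf p"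
    "pre (p \<circ> \<tau>) = pre p" "suf (p \<circ> \<tau>) = suf p" for p
    unfolding pre_def suf_def
    by (auto intro!: arg_cong[where f=prod_list] map_cong simp: f_def \<tau>_def)
  have sum_eq: "qminor_fn t as (bs \<circ> \<tau>) k c + qminor_fn t as bs k c = (\<Sum>p\<in>P. T p)"
    unfolding qminor_fn_def P_def f_def[symmetric] sum.distrib[symmetric]
  proof (rule sum.cong[OF refl])
    fix p
    have "f p bs' (Suc s) = shiftu (c - int s - 1) (Tser t (as (p (Suc s))) (bs' (Suc s)))" for bs'
      by (simp add: f_def algebra_simps)
    then show "of_int (sign p) * prod_list (map (f p (bs \<circ> \<tau>)) [0..<k])
        + of_int (sign p) * prod_list (map (f p bs) [0..<k]) = T p"
      unfolding prod_list_map_upt_split_adjacent[OF sk] pre_suf T_def G_def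
      by (simp add: f_def \<tau>_def pre_def suf_def algebra_simps)
  qed
  have \<tau>: "\<tau> permutes {0..<k}"
    unfolding \<tau>_def using sk by (intro permutes_swap_id) auto
  have "(\<Sum>p\<in>P. T p) = 0"
    unfolding P_def
  proof (rule sum_permutes_eq_0_if_antisymmetric[OF \<tau>])
    fix p assume p: "p permutes {0..<k}"
    have "sign (p \<circ> \<tau>) = - sign p"
      using sign_compose[OF permutes_imp_permutation[OF _ p] permutation_swap_id, of s "Suc s"]
      by (simp add: \<tau>_def sign_swap_id)
    moreover have "as (p s) \<in> as ` {0..<k}" "as (p (Suc s)) \<in> as ` {0..<k}"
      using permutes_in_image[OF p, of s] permutes_in_image[OF p, of "Suc s"] sk by auto
    then have "G (as (p (Suc s))) (as (p s)) = G (as (p s)) (as (p (Suc s)))"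
      using sym[unfolded swap_symmetric_def] Cs unfolding G_def by (simp only:)
    ultimately show "T (p \<circ> \<tau>) = - T p"
      unfolding T_def pre_suf by (simp add: \<tau>_def)
  qed
  then show ?thesis
    using sum_eq unfolding \<tau>_def by (simp only: eq_neg_iff_add_eq_0)
qed

lemma qminor_fn_eq_0_if_eq_cols:
  fixes t :: "nat \<Rightarrow> nat \<Rightarrow> nat \<Rightarrow> 'a::real_algebra_1"
  assumes sym: "swap_symmetric t (as ` {0..<k}) Cs"
    and "\<forall>q<k. bs q \<in> Cs" "a < b" "b < k" "bs a = bs b"
  shows "qminor_fn t as bs k c = 0"
  using assms(2-)
proof (induction b arbitrary: bs)
  case 0
  then show ?case by simp
next
  case (Suc b)
  define bs' where "bs' = bs \<circ> transpose b (Suc b)"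
  have swap: "qminor_fn t as bs' k c = - qminor_fn t as bs k c"
    unfolding bs'_def using Suc.prems by (intro qminor_fn_swap_adjacent_cols[OF _ sym]) auto
  show ?case
  proof (cases "a = b")
    case True
    then have "bs' = bs"
      using Suc.prems by (auto simp: bs'_def transpose_def fun_eq_iff)
    then show ?thesis
      using swap fps_eq_neg_imp_zero by simp
  next
    case False
    have "\<forall>q<k. bs' q \<in> Cs"
      using Suc.prems by (auto simp: bs'_def transpose_def)
    moreover have "bs' a = bs' b"
      using Suc.prems False by (simp add: bs'_def)
    ultimately have "qminor_fn t as bs' k c = 0"
      using Suc.IH Suc.prems False by simp
    then show ?thesis
      using swap by simp
  qed
qed

definition qcofactor ::
    "(nat \<Rightarrow> nat \<Rightarrow> nat \<Rightarrow> 'a::real_algebra_1) \<Rightarrow> (nat \<Rightarrow> nat) \<Rightarrow> (nat \<Rightarrow> nat) \<Rightarrow> nat \<Rightarrow> int \<Rightarrow> nat \<Rightarrow> 'a fps" where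
  "qcofactor t as bs k c q = (\<Sum>p\<in>{p. p permutes {0..<Suc k} \<and> p k = q}.
      of_int (sign p) * prod_list (map (\<lambda>s. shiftu (c - int s) (Tser t (as (p s)) (bs s))) [0..<k]))"

lemma qminor_fn_expand_last_col:
  "qminor_fn t as bs (Suc k) c
     = (\<Sum>q<Suc k. qcofactor t as bs k c q * shiftu (c - int k) (Tser t (as q) (bs k)))"
proof -
  define P where "P = {p. p permutes {0..<Suc k}}"
  define pre where "pre p = prod_list (map (\<lambda>s. shiftu (c - int s) (Tser t (as (p s)) (bs s))) [0..<k])" for p
  have "qminor_fn t as bs (Suc k) c
      = (\<Sum>p\<in>P. of_int (sign p) * pre p * shiftu (c - int k) (Tser t (as (p k)) (bs k)))"
    unfolding qminor_fn_def P_def pre_def by (simp add: mult.assoc)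
  also have "\<dots> = (\<Sum>q<Suc k. \<Sum>p\<in>{p\<in>P. p k = q}.
      of_int (sign p) * pre p * shiftu (c - int k) (Tser t (as (p k)) (bs k)))"
  proof (rule sum.group[symmetric])
    show "finite P"
      by (simp add: P_def finite_permutations)
    show "(\<lambda>p. p k) ` P \<subseteq> {..<Suc k}"
      using permutes_in_image[of _ "{0..<Suc k}" k] by (auto simp: P_def)
  qed simp
  also have "\<dots> = (\<Sum>q<Suc k. qcofactor t as bs k c q * shiftu (c - int k) (Tser t (as q) (bs k)))"
    unfolding qcofactor_def P_def pre_def[symmetric] sum_distrib_right
    by (intro sum.cong refl) simp_all
  finally show ?thesis .
qed

lemma qcofactor_cong: "(\<And>s. s < k \<Longrightarrow> bs s = bs' s) \<Longrightarrow> qcofactor t as bs k c q = qcofactor t as bs' k c q"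
  unfolding qcofactor_def
  by (intro sum.cong refl arg_cong2[where f="(*)"] arg_cong[where f=prod_list] map_cong) auto

lemma qcofactor_last: "qcofactor t as bs k c k = qminor_fn t as bs k c"
proof -
  have "p permutes {0..<k}" if "p permutes {0..<Suc k}" "p k = k" for p
    using that by (intro permutes_superset[OF that(1)]) auto
  moreover have "p permutes {0..<Suc k} \<and> p k = k" if "p permutes {0..<k}" for p
    using that by (auto intro: permutes_subset permutes_not_in)
  ultimately have "{p. p permutes {0..<Suc k} \<and> p k = k} = {p. p permutes {0..<k}}"
    by blast
  then show ?thesis
    unfolding qcofactor_def qminor_fn_def by simp
qed

lemma fps_nth_0_prod_list: "prod_list (map f xs) $ 0 = prod_list (map (\<lambda>x. f x $ 0) xs)"
  by (induction xs) simp_all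

lemma prod_list_map_indicator:
  "prod_list (map (\<lambda>x. if P x then 1 else 0) xs) = (if \<forall>x\<in>set xs. P x then 1 else (0::'a::semiring_1))"
  by (induction xs) auto

lemma qminor_fn_nth_0:
  assumes "\<And>x. x < k \<Longrightarrow> as x = bs x" and "inj_on as {0..<k}"
  shows "qminor_fn t as bs k c $ 0 = 1"
proof -
  define P where "P = {p. p permutes {0..<k}}"
  have factor: "Tser t (as (p s)) (bs s) $ 0 = (if p s = s then 1 else 0)"
    if "p \<in> P" "s < k" for p s
  proof -
    have "p s < k"
      using that permutes_in_image by (fastforce simp: P_def)
    then have "as (p s) = bs s \<longleftrightarrow> p s = s"
      using assms that(2) by (metis atLeastLessThan_iff inj_on_eq_iff zero_le)
    then show ?thesis
      by (simp add: Tser_nth tc_def)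
  qed
  have fixes_all: "(\<forall>s\<in>{0..<k}. p s = s) \<longleftrightarrow> p = id" if "p \<in> P" for p
    using that permutes_not_in by (fastforce simp: P_def)
  have "qminor_fn t as bs k c $ 0
      = (\<Sum>p\<in>P. of_int (sign p) * prod_list (map (\<lambda>s. Tser t (as (p s)) (bs s) $ 0) [0..<k]))"
    unfolding qminor_fn_def fps_sum_nth P_def[symmetric]
    by (simp add: fps_of_int[symmetric] fps_nth_0_prod_list shiftu_nth_0 o_def)
  also have "\<dots> = (\<Sum>p\<in>P. of_int (sign p) * prod_list (map (\<lambda>s. if p s = s then 1 else 0) [0..<k]))"
    by (intro sum.cong refl arg_cong2[where f="(*)"] arg_cong[where f=prod_list] map_cong)
      (auto simp: factor)
  also have "\<dots> = (\<Sum>p\<in>P. if p = id then 1 else 0)"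
    by (intro sum.cong refl) (auto simp: prod_list_map_indicator fixes_all)
  also have "\<dots> = 1"
    by (simp add: P_def permutes_id finite_permutations)
  finally show ?thesis .
qed

section \<open>Matrices of power series\<close>

definition mat_mult :: "nat set \<Rightarrow> (nat \<Rightarrow> nat \<Rightarrow> 'a::ring_1) \<Rightarrow> (nat \<Rightarrow> nat \<Rightarrow> 'a) \<Rightarrow> nat \<Rightarrow> nat \<Rightarrow> 'a" where
  "mat_mult I A B p q = (\<Sum>r\<in>I. A p r * B r q)"

definition mat_id :: "nat \<Rightarrow> nat \<Rightarrow> 'a::ring_1" where
  "mat_id p q = (if p = q then 1 else 0)"

fun mat_pow :: "nat set \<Rightarrow> (nat \<Rightarrow> nat \<Rightarrow> 'a::ring_1) \<Rightarrow> nat \<Rightarrow> nat \<Rightarrow> nat \<Rightarrow> 'a" where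
  "mat_pow I H 0 = mat_id"
| "mat_pow I H (Suc k) = mat_mult I H (mat_pow I H k)"

lemma mat_mult_assoc: "mat_mult I (mat_mult I A B) C p q = mat_mult I A (mat_mult I B C) p q"
proof -
  have "mat_mult I (mat_mult I A B) C p q = (\<Sum>r\<in>I. \<Sum>s\<in>I. A p s * B s r * C r q)"
    unfolding mat_mult_def by (simp add: sum_distrib_right)
  also have "\<dots> = (\<Sum>s\<in>I. \<Sum>r\<in>I. A p s * B s r * C r q)"
    by (rule sum.swap)
  also have "\<dots> = mat_mult I A (mat_mult I B C) p q"
    unfolding mat_mult_def by (simp add: sum_distrib_left mult.assoc)
  finally show ?thesis .
qed

lemma mat_mult_cong_right: "(\<And>r. r \<in> I \<Longrightarrow> B r q = B' r q) \<Longrightarrow> mat_mult I A B p q = mat_mult I A B' p q"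
  unfolding mat_mult_def by (rule sum.cong) auto

lemma mat_mult_id_left:
  assumes "finite I" "p \<in> I"
  shows "mat_mult I mat_id B p q = B p q"
proof -
  have "mat_mult I mat_id B p q = (\<Sum>r\<in>I. if p = r then B r q else 0)"
    unfolding mat_mult_def mat_id_def by (rule sum.cong) auto
  then show ?thesis
    using assms by simp
qed

lemma mat_mult_id_right:
  assumes "finite I" "q \<in> I"
  shows "mat_mult I A mat_id p q = A p q"
proof -
  have "mat_mult I A mat_id p q = (\<Sum>r\<in>I. if r = q then A p r else 0)"
    unfolding mat_mult_def mat_id_def by (rule sum.cong) auto
  then show ?thesis
    using assms by simp
qed

lemma mat_pow_Suc_right:
  assumes "finite I" "p \<in> I" "q \<in> I"
  shows "mat_pow I H (Suc k) p q = mat_mult I (mat_pow I H k) H p q"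
  using assms(2,3)
proof (induction k arbitrary: p q)
  case 0
  then show ?case by (simp add: mat_mult_id_left mat_mult_id_right assms(1))
next
  case (Suc k)
  have "mat_pow I H (Suc (Suc k)) p q = mat_mult I H (mat_pow I H (Suc k)) p q"
    by simp
  also have "\<dots> = mat_mult I H (mat_mult I (mat_pow I H k) H) p q"
    by (rule mat_mult_cong_right) (use Suc in auto)
  also have "\<dots> = mat_mult I (mat_pow I H (Suc k)) H p q"
    by (simp add: mat_mult_assoc)
  finally show ?case .
qed

lemma mat_geometric_sum_left:
  assumes "finite I" "p \<in> I"
  shows "mat_mult I (\<lambda>a b. mat_id a b - H a b) (\<lambda>a b. \<Sum>i<K. mat_pow I H i a b) p q
    = mat_id p q - mat_pow I H K p q"
proof (induction K)
  case 0
  then show ?case by (simp add: mat_mult_def)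
next
  case (Suc K)
  have "mat_mult I (\<lambda>a b. mat_id a b - H a b) (\<lambda>a b. \<Sum>i<Suc K. mat_pow I H i a b) p q
     = mat_mult I (\<lambda>a b. mat_id a b - H a b) (\<lambda>a b. \<Sum>i<K. mat_pow I H i a b) p q
       + mat_mult I (\<lambda>a b. mat_id a b - H a b) (mat_pow I H K) p q"
    unfolding mat_mult_def by (simp add: distrib_left sum.distrib)
  also have "mat_mult I (\<lambda>a b. mat_id a b - H a b) (mat_pow I H K) p q
      = mat_mult I mat_id (mat_pow I H K) p q - mat_mult I H (mat_pow I H K) p q"
    unfolding mat_mult_def by (simp add: left_diff_distrib sum_subtractf)
  also have "\<dots> = mat_pow I H K p q - mat_pow I H (Suc K) p q"
    using assms by (simp add: mat_mult_id_left)
  finally show ?case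
    unfolding Suc.IH by simp
qed

lemma mat_geometric_sum_right:
  assumes "finite I" "p \<in> I" "q \<in> I"
  shows "mat_mult I (\<lambda>a b. \<Sum>i<K. mat_pow I H i a b) (\<lambda>a b. mat_id a b - H a b) p q
    = mat_id p q - mat_pow I H K p q"
proof (induction K)
  case 0
  then show ?case by (simp add: mat_mult_def)
next
  case (Suc K)
  have "mat_mult I (\<lambda>a b. \<Sum>i<Suc K. mat_pow I H i a b) (\<lambda>a b. mat_id a b - H a b) p q
     = mat_mult I (\<lambda>a b. \<Sum>i<K. mat_pow I H i a b) (\<lambda>a b. mat_id a b - H a b) p q
       + mat_mult I (mat_pow I H K) (\<lambda>a b. mat_id a b - H a b) p q"
    unfolding mat_mult_def by (simp add: distrib_right sum.distrib)
  also have "mat_mult I (mat_pow I H K) (\<lambda>a b. mat_id a b - H a b) p q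
      = mat_mult I (mat_pow I H K) mat_id p q - mat_mult I (mat_pow I H K) H p q"
    unfolding mat_mult_def by (simp add: right_diff_distrib sum_subtractf)
  also have "\<dots> = mat_pow I H K p q - mat_pow I H (Suc K) p q"
    using assms by (simp only: mat_mult_id_right mat_pow_Suc_right)
  finally show ?case
    unfolding Suc.IH by simp
qed

lemma mat_pow_nth_eq_0:
  fixes H :: "nat \<Rightarrow> nat \<Rightarrow> 'a::ring_1 fps"
  assumes H0: "\<And>a b. a \<in> I \<Longrightarrow> b \<in> I \<Longrightarrow> H a b $ 0 = 0"
  shows "p \<in> I \<Longrightarrow> n < k \<Longrightarrow> mat_pow I H k p q $ n = 0"
proof (induction k arbitrary: n p)
  case 0
  then show ?case by simp
next
  case (Suc k)
  have "H p r $ i * mat_pow I H k r q $ (n - i) = 0" if "r \<in> I" "i \<le> n" for r i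
    using Suc that H0 by (cases "i = 0") auto
  then show ?case
    by (simp add: mat_mult_def fps_sum_nth fps_mult_nth)
qed

text \<open>The coefficientwise limit of the partial sums of \<open>\<Sum> H\<^sup>i\<close>, which stabilise when \<open>H\<close> has no
  constant term; it inverts \<open>1 - H\<close>.\<close>

definition neumann_series :: "nat set \<Rightarrow> (nat \<Rightarrow> nat \<Rightarrow> 'a::ring_1 fps) \<Rightarrow> nat \<Rightarrow> nat \<Rightarrow> 'a fps" where
  "neumann_series I H q p = Abs_fps (\<lambda>n. (\<Sum>i<Suc n. mat_pow I H i q p) $ n)"

lemma neumann_series_nth:
  assumes H0: "\<And>a b. a \<in> I \<Longrightarrow> b \<in> I \<Longrightarrow> H a b $ 0 = 0" and "q \<in> I" "n \<le> M"
  shows "neumann_series I H q p $ n = (\<Sum>i<Suc M. mat_pow I H i q p) $ n"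
proof -
  have "(\<Sum>i<Suc M. mat_pow I H i q p) $ n = (\<Sum>i<Suc n. mat_pow I H i q p $ n)"
    unfolding fps_sum_nth using assms(2,3)
    by (intro sum.mono_neutral_right) (auto simp: mat_pow_nth_eq_0[of I H, OF H0])
  then show ?thesis
    by (simp add: neumann_series_def fps_sum_nth)
qed

lemma neumann_series_right_inverse:
  fixes H :: "nat \<Rightarrow> nat \<Rightarrow> 'a::ring_1 fps"
  assumes fin: "finite I" and H0: "\<And>a b. a \<in> I \<Longrightarrow> b \<in> I \<Longrightarrow> H a b $ 0 = 0"
    and p: "p \<in> I" "p' \<in> I"
  shows "(\<Sum>q\<in>I. (mat_id p q - H p q) * neumann_series I H q p') = mat_id p p'"
proof (rule fps_ext)
  fix n
  have "(\<Sum>q\<in>I. (mat_id p q - H p q) * neumann_series I H q p') $ n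
      = mat_mult I (\<lambda>a b. mat_id a b - H a b) (\<lambda>a b. \<Sum>i<Suc n. mat_pow I H i a b) p p' $ n"
    unfolding mat_mult_def fps_sum_nth[where S = I] fps_mult_nth
    by (intro sum.cong refl arg_cong2[where f="(*)"] neumann_series_nth[OF H0]) auto
  also have "\<dots> = mat_id p p' $ n"
    unfolding mat_geometric_sum_left[OF fin p(1)]
    by (simp only: fps_sub_nth mat_pow_nth_eq_0[of I H, OF H0 p(1) lessI] diff_zero)
  finally show "(\<Sum>q\<in>I. (mat_id p q - H p q) * neumann_series I H q p') $ n = mat_id p p' $ n" .
qed

lemma neumann_series_left_inverse:
  fixes H :: "nat \<Rightarrow> nat \<Rightarrow> 'a::ring_1 fps"
  assumes fin: "finite I" and H0: "\<And>a b. a \<in> I \<Longrightarrow> b \<in> I \<Longrightarrow> H a b $ 0 = 0"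
    and q: "q \<in> I" "q' \<in> I"
  shows "(\<Sum>p\<in>I. neumann_series I H q p * (mat_id p q' - H p q')) = mat_id q q'"
proof (rule fps_ext)
  fix n
  have "(\<Sum>p\<in>I. neumann_series I H q p * (mat_id p q' - H p q')) $ n
      = mat_mult I (\<lambda>a b. \<Sum>i<Suc n. mat_pow I H i a b) (\<lambda>a b. mat_id a b - H a b) q q' $ n"
    unfolding mat_mult_def fps_sum_nth[where S = I] fps_mult_nth
    using q by (intro sum.cong refl arg_cong2[where f="(*)"] neumann_series_nth[OF H0]) auto
  also have "\<dots> = mat_id q q' $ n"
    unfolding mat_geometric_sum_right[OF fin q]
    by (simp only: fps_sub_nth mat_pow_nth_eq_0[of I H, OF H0 q(1) lessI] diff_zero)
  finally show "(\<Sum>p\<in>I. neumann_series I H q p * (mat_id p q' - H p q')) $ n = mat_id q q' $ n" .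
qed

lemma mat_invertible_on_fps:
  fixes B :: "nat \<Rightarrow> nat \<Rightarrow> 'a::ring_1 fps"
  assumes fin: "finite I" and B0: "\<And>a b. a \<in> I \<Longrightarrow> b \<in> I \<Longrightarrow> B a b $ 0 = mat_id a b"
  shows "mat_invertible_on I I B"
proof -
  define H where "H a b = mat_id a b - B a b" for a b
  have H0: "H a b $ 0 = 0" if "a \<in> I" "b \<in> I" for a b
    using B0[OF that] by (simp add: H_def mat_id_def)
  have B: "B a b = mat_id a b - H a b" for a b
    by (simp add: H_def)
  define Ninv where "Ninv q p = (if q \<in> I \<and> p \<in> I then neumann_series I H q p else 0)" for q p
  have "(\<Sum>q\<in>I. B p q * Ninv q p') = mat_id p p'" if "p \<in> I" "p' \<in> I" for p p'
    using that neumann_series_right_inverse[OF fin H0 that] by (simp add: B Ninv_def)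
  moreover have "(\<Sum>p\<in>I. Ninv q p * B p q') = mat_id q q'" if "q \<in> I" "q' \<in> I" for q q'
    using that neumann_series_left_inverse[OF fin H0 that] by (simp add: B Ninv_def)
  ultimately have "is_mat_inv_on I I B Ninv"
    unfolding is_mat_inv_on_def by (simp add: Ninv_def mat_id_def)
  then show ?thesis
    unfolding mat_invertible_on_def by blast
qed

lemma is_mat_inv_on_unique:
  fixes M :: "nat \<Rightarrow> nat \<Rightarrow> 'a::ring_1"
  assumes "finite I" "finite J" and N1: "is_mat_inv_on I J M N1" and N2: "is_mat_inv_on I J M N2"
  shows "N1 = N2"
proof (intro ext)
  fix q p
  show "N1 q p = N2 q p"
  proof (cases "q \<in> J \<and> p \<in> I")
    case False
    then show ?thesis using N1 N2 unfolding is_mat_inv_on_def by auto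
  next
    case True
    have "N1 q p = (\<Sum>q'\<in>J. if q = q' then N1 q' p else 0)"
      using True assms(2) by simp
    also have "\<dots> = (\<Sum>q'\<in>J. (\<Sum>p'\<in>I. N2 q p' * M p' q') * N1 q' p)"
      using N2 True unfolding is_mat_inv_on_def by (intro sum.cong refl) auto
    also have "\<dots> = (\<Sum>p'\<in>I. \<Sum>q'\<in>J. N2 q p' * M p' q' * N1 q' p)"
      by (simp add: sum_distrib_right sum.swap[of _ J])
    also have "\<dots> = (\<Sum>p'\<in>I. N2 q p' * (\<Sum>q'\<in>J. M p' q' * N1 q' p))"
      by (simp add: sum_distrib_left mult.assoc)
    also have "\<dots> = (\<Sum>p'\<in>I. if p' = p then N2 q p' else 0)"
      using N1 True unfolding is_mat_inv_on_def by (intro sum.cong refl) auto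
    also have "\<dots> = N2 q p"
      using True assms(1) by simp
    finally show ?thesis .
  qed
qed

lemma is_mat_inv_on_mat_inv_on:
  assumes "finite I" "finite J" "mat_invertible_on I J M"
  shows "is_mat_inv_on I J M (mat_inv_on I J M)"
proof -
  obtain N where N: "is_mat_inv_on I J M N"
    using assms(3) unfolding mat_invertible_on_def by blast
  then have "mat_inv_on I J M = N"
    unfolding mat_inv_on_def using is_mat_inv_on_unique[OF assms(1,2)] by blast
  with N show ?thesis by simp
qed

lemma invertible_el_fps:
  fixes f :: "'a::ring_1 fps"
  assumes "f $ 0 = 1"
  shows "invertible_el f"
proof -
  have "mat_invertible_on {0} {0} (\<lambda>_ _. f)"
    using assms by (intro mat_invertible_on_fps) (simp_all add: mat_id_def)
  then show ?thesis
    unfolding mat_invertible_on_def is_mat_inv_on_def invertible_el_def by auto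
qed

lemma invertible_el_rinv:
  assumes "invertible_el x"
  shows "x * rinv x = 1" "rinv x * x = 1"
proof -
  obtain y where y: "x * y = 1" "y * x = 1"
    using assms unfolding invertible_el_def by blast
  have "z = y" if "x * z = 1 \<and> z * x = 1" for z
    by (metis that y(1) mult.assoc mult_1_left)
  then have "rinv x = y"
    unfolding rinv_def using y by blast
  with y show "x * rinv x = 1" "rinv x * x = 1" by simp_all
qed

section \<open>Quasideterminants\<close>

lemma quasidet_left_mult:
  fixes M :: "nat \<Rightarrow> nat \<Rightarrow> 'a::ring_1"
  assumes fin: "finite R" "finite C" and i: "i \<notin> R" and j: "j \<notin> C"
    and inv: "mat_invertible_on R C M"
    and ann: "\<And>l. l \<in> C \<Longrightarrow> (\<Sum>p\<in>R. Y p * M p l) + D * M i l = 0"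
  shows "D * quasidet (R \<union> {i}) (C \<union> {j}) M i j = (\<Sum>p\<in>R. Y p * M p j) + D * M i j"
proof -
  define Minv where "Minv = mat_inv_on R C M"
  have right_inv: "(\<Sum>q\<in>C. M p q * Minv q p') = (if p = p' then 1 else 0)" if "p \<in> R" "p' \<in> R" for p p'
    using is_mat_inv_on_mat_inv_on[OF fin inv] that unfolding Minv_def is_mat_inv_on_def by blast
  define E where "E l = (\<Sum>p\<in>R. Y p * M p l)" for l
  have DM: "D * M i q = - E q" if "q \<in> C" for q
    using ann[OF that] unfolding E_def by (simp add: eq_neg_iff_add_eq_0 add.commute)
  have EMinv: "(\<Sum>q\<in>C. E q * Minv q p') = Y p'" if "p' \<in> R" for p'
  proof -
    have "(\<Sum>q\<in>C. E q * Minv q p') = (\<Sum>p\<in>R. Y p * (\<Sum>q\<in>C. M p q * Minv q p'))"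
      unfolding E_def by (simp add: sum_distrib_left sum_distrib_right mult.assoc sum.swap[of _ C])
    also have "\<dots> = (\<Sum>p\<in>R. if p = p' then Y p else 0)"
      using that by (intro sum.cong refl) (simp add: right_inv)
    also have "\<dots> = Y p'"
      using that fin by simp
    finally show ?thesis .
  qed
  have "D * (\<Sum>q\<in>C. \<Sum>p\<in>R. M i q * Minv q p * M p j) = (\<Sum>q\<in>C. \<Sum>p\<in>R. (D * M i q) * Minv q p * M p j)"
    by (simp add: sum_distrib_left mult.assoc)
  also have "\<dots> = - (\<Sum>p\<in>R. (\<Sum>q\<in>C. E q * Minv q p) * M p j)"
    by (simp add: DM sum_distrib_right sum_negf sum.swap[of _ C])
  also have "\<dots> = - (\<Sum>p\<in>R. Y p * M p j)"
    by (simp add: EMinv)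
  finally have "D * (\<Sum>q\<in>C. \<Sum>p\<in>R. M i q * Minv q p * M p j) = - (\<Sum>p\<in>R. Y p * M p j)" .
  moreover have "(R \<union> {i}) - {i} = R" "(C \<union> {j}) - {j} = C"
    using i j by auto
  ultimately show ?thesis
    unfolding quasidet_def Minv_def by (simp add: right_diff_distrib)
qed

lemma Tser_mat_invertible_on: "finite I \<Longrightarrow> mat_invertible_on I I (Tser t)"
  by (rule mat_invertible_on_fps) (simp_all add: Tser_nth tc_def mat_id_def)

lemma qminor_nth_0:
  fixes t :: "nat \<Rightarrow> nat \<Rightarrow> nat \<Rightarrow> 'a::real_algebra_1"
  shows "distinct as \<Longrightarrow> qminor t as as c $ 0 = 1"
  unfolding qminor_eq_qminor_fn by (rule qminor_fn_nth_0) (auto intro: inj_on_nth)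

lemma qminor_invertible:
  fixes t :: "nat \<Rightarrow> nat \<Rightarrow> nat \<Rightarrow> 'a::real_algebra_1"
  shows "distinct as \<Longrightarrow> invertible_el (qminor t as as c)"
  by (rule invertible_el_fps, rule qminor_nth_0)

lemma qminor_eq_0_if_not_distinct_cols:
  fixes t :: "nat \<Rightarrow> nat \<Rightarrow> nat \<Rightarrow> 'a::real_algebra_1"
  assumes "swap_symmetric t (set as) (set bs)" "length as = length bs" "\<not> distinct bs"
  shows "qminor t as bs c = 0"
proof -
  obtain a b where "a < b" "b < length bs" "bs ! a = bs ! b"
    using assms(3) by (metis distinct_conv_nth linorder_neqE_nat)
  moreover have "nth as ` {0..<length bs} = set as"
    using assms(2) by (simp add: nth_image)
  ultimately show ?thesis
    unfolding qminor_eq_qminor_fn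
  proof (intro qminor_fn_eq_0_if_eq_cols[where Cs = "set bs" and a = a and b = b])
    show "swap_symmetric t (nth as ` {0..<length bs}) (set bs)"
      using assms(1) \<open>nth as ` {0..<length bs} = set as\<close> by simp
  qed auto
qed

lemma qminor_snoc_expand:
  fixes t :: "nat \<Rightarrow> nat \<Rightarrow> nat \<Rightarrow> 'a::real_algebra_1"
  assumes "length as = k" "length bs = k"
  shows "qminor t (as @ [i]) (bs @ [b]) (int k)
    = (\<Sum>q<k. qcofactor t (nth (as @ [i])) (nth bs) k (int k) q * Tser t (as ! q) b)
      + qminor t as bs (int k) * Tser t i b"
proof -
  have cof: "qcofactor t (nth (as @ [i])) (nth (bs @ [b])) k (int k) q
      = qcofactor t (nth (as @ [i])) (nth bs) k (int k) q" for q
    using assms by (intro qcofactor_cong) (simp add: nth_append)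
  have last: "qcofactor t (nth (as @ [i])) (nth bs) k (int k) k = qminor t as bs (int k)"
    unfolding qcofactor_last qminor_eq_qminor_fn assms(2)
    using assms(1) by (intro qminor_fn_cong) (simp_all add: nth_append)
  show ?thesis
    unfolding qminor_eq_qminor_fn[of t "as @ [i]"]
    using assms by (simp add: qminor_fn_expand_last_col cof last shiftu_0 nth_append)
qed

theorem proposition3p9:
  fixes g :: gtype and n m i j :: nat
    and t :: "nat \<Rightarrow> nat \<Rightarrow> nat \<Rightarrow> 'a::real_algebra_1"
  assumes "n \<ge> 1"
    and "1 \<le> m"
    and "if g = TB then m \<le> n else m \<le> n - 1"
    and "RTT g n t"
    and "m + 1 \<le> i" and "i \<le> pr (Ndim g n) (m + 1)"
    and "m + 1 \<le> j" and "j \<le> pr (Ndim g n) (m + 1)"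
  shows "mat_invertible_on {1..m} {1..m} (Tser t)
    \<and> invertible_el (qminor t [1..<m+1] [1..<m+1] (int m))
    \<and> quasidet ({1..m} \<union> {i}) ({1..m} \<union> {j}) (Tser t) i j
       = rinv (qminor t [1..<m+1] [1..<m+1] (int m))
         * qminor t ([1..<m+1] @ [i]) ([1..<m+1] @ [j]) (int m)"
proof -
  let ?N = "Ndim g n" and ?as = "[1..<m+1]"
  define D where "D = qminor t ?as ?as (int m)"
  define Y where "Y p = qcofactor t (nth (?as @ [i])) (nth ?as) m (int m) (p - 1)" for p
  have N: "2 * m + 1 \<le> ?N" and ij: "m < i" "i \<le> ?N - m" "m < j" "j \<le> ?N - m"
    using assms by (auto simp: Ndim_def pr_def split: if_splits)
  have T_inv: "mat_invertible_on {1..m} {1..m} (Tser t)"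
    by (simp add: Tser_mat_invertible_on)
  have D_inv: "invertible_el D"
    unfolding D_def by (simp add: qminor_invertible del: upt_Suc)
  have expand: "qminor t (?as @ [i]) (?as @ [b]) (int m) = (\<Sum>p\<in>{1..m}. Y p * Tser t p b) + D * Tser t i b" for b
    using qminor_snoc_expand[of ?as m ?as t i b]
    by (simp add: Y_def D_def sum.atLeast1_atMost_eq del: upt_Suc)
  have vanish: "qminor t (?as @ [i]) (?as @ [l]) (int m) = 0" if "l \<in> {1..m}" for l
  proof (rule qminor_eq_0_if_not_distinct_cols)
    show "swap_symmetric t (set (?as @ [i])) (set (?as @ [l]))"
      using that ij N by (intro RTT_swap_symmetric[OF assms(4)]) (auto simp: pr_def)
  qed (use that in auto)
  have "D * quasidet ({1..m} \<union> {i}) ({1..m} \<union> {j}) (Tser t) i j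
      = (\<Sum>p\<in>{1..m}. Y p * Tser t p j) + D * Tser t i j"
  proof (rule quasidet_left_mult[OF _ _ _ _ T_inv])
    show "(\<Sum>p\<in>{1..m}. Y p * Tser t p l) + D * Tser t i l = 0" if "l \<in> {1..m}" for l
      using vanish[OF that] unfolding expand .
  qed (use ij in auto)
  also have "\<dots> = qminor t (?as @ [i]) (?as @ [j]) (int m)"
    by (rule expand[symmetric])
  finally have "quasidet ({1..m} \<union> {i}) ({1..m} \<union> {j}) (Tser t) i j
      = rinv D * qminor t (?as @ [i]) (?as @ [j]) (int m)"
    by (metis invertible_el_rinv(2)[OF D_inv] mult.assoc mult_1_left)
  with T_inv D_inv show ?thesis
    unfolding D_def by blast
qed

end
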